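(* Let $i\in\mathbb N$, let $\mathcal T$ be a tree with root $\emptyset$, let $v\succ\emptyset$ in $\mathcal T$ and let $(u_l)_{l=0}^r$ be the branch from $\emptyset$ to $v$. (1) Let $\gamma\in\Gamma$ with tree analysis $(I_t,\varepsilon_t,\eta_t)_{t\in\mathcal T}$, and let $y\in\mathscr B_{mT}$ be a normalised finitely supported vector such that (a) $v$ is the covering index for $y$, (b) $|d^*_\xi(y)|<4^{-i-3}$ for all $\xi\in\Gamma$, and (c) $|e^*_\gamma(y)|>4^{-i-1}$. Then $r\le i+1$. (2) Let $f\in W$ with tree analysis $(f_t)_{t\in\mathcal T}$, let $z=e_l\in T$ for some $l\in\mathbb N$, and assume (a) $f_v=e^*_l$ and (b) $f(z)>4^{-i-1}$. Then $r\le i$.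
   Context: Fix sequences $(m_j)$, $(n_j)$ of natural numbers with $m_1=n_1=4$, $m_{j+1}\ge m_j^2$, $n_{j+1}\ge m_{j+1}^2(4n_j)^{\log_2 m_{j+1}}$. Mixed Tsirelson space $T$: $W\subset c_{00}$ is the smallest set containing $\pm e^*_k$ ($k\in\mathbb N$) such that if $j\in\mathbb N$, $d\le n_j$ and $f_1<\dots<f_d\in W$ then $m_j^{-1}\sum f_i\in W$; $T$ is the completion of $c_{00}$ under $\sup_{f\in W}f(x)$, with unit vector basis $(e_n)$. A tree analysis of $f\in W$ is a family $(f_t)_{t\in\mathcal T}$ indexed by a finite tree with root $\emptyset$ such that $f_\emptyset=f$, $f_t=\pm e^*_k$ for terminal $t$, and for non-terminal $t$, $f_t=m_j^{-1}\sum_{s\in S_t}f_s$ for some $j$ with $(f_s)_{s\in S_t}$ a block sequence in $W$ of length at most $n_j$ ($S_t$ = immediate successors of $t$). The space $\mathscr B_{mT}$: $\Delta_1=\{1\}$; given $\Delta_1,\dots,\Delta_q$, with $\Gamma_0=\emptyset$, $\Gamma_p=\bigcup_{r\le p}\Delta_r$, $\Delta_{q+1}$ consists of the tuples $(q+1,0,m_j,\varepsilon e^*_\eta)$ with $j\le q+1$, $\varepsilon=\pm1$, $\eta\in\Gamma_q$, and the tuples $(q+1,\xi,m_j,\varepsilon e^*_\eta)$ with $1\le p<q$, $j\le p$, $\xi\in\Delta_p$, $w(\xi)=m_j^{-1}$, $\mathrm{age}(\xi)<n_j$, $\varepsilon=\pm1$, $\eta\in\Gamma_q\setminus\Gamma_p$;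 weight $w=m_j^{-1}$, rank $q+1$, age $1$ resp. $\mathrm{age}(\xi)+1$. $\Gamma=\bigcup\Delta_q$. In $\ell_1(\Gamma)$, $d^*_\gamma=e^*_\gamma-c^*_\gamma$ with $c^*_\gamma=m_j^{-1}\varepsilon P^*_{(0,q]}e^*_\eta$ for $\gamma=(q+1,0,m_j,\varepsilon e^*_\eta)$ and $c^*_\gamma=e^*_\xi+m_j^{-1}\varepsilon P^*_{(p,q]}e^*_\eta$ for $\gamma=(q+1,\xi,m_j,\varepsilon e^*_\eta)$, $\xi\in\Delta_p$ ($P^*_{(p,q]}$ the basis projection onto $\mathrm{span}\{d^*_\delta:\mathrm{rank}\,\delta\in(p,q]\}$). $(d^*_\gamma)$ is a basis of $\ell_1(\Gamma)$, $(d_\gamma)\subset\ell_\infty(\Gamma)$ is biorthogonal, $\mathscr B_{mT}=\overline{\mathrm{span}}\{d_\gamma\}$, and $e^*_\gamma(x)=x(\gamma)$. For an interval $I$, $P_I$ is the projection of $\mathscr B_{mT}$ onto $\overline{\mathrm{span}}\{d_\delta:\mathrm{rank}\,\delta\in I\}$ along the other $d_\delta$, and $e^*_\eta P_I=P^*_Ie^*_\eta$. $\mathrm{rng}$ of a finitely supported vector (resp. of a functional in $\mathrm{span}\{d^*_\delta\}$) is the smallest interval $[p,q]$ of ranks such that it lies in the span of the $d_\delta$ (resp. $d^*_\delta$) with rank in $[p,q]$. Evaluation analysis: for $\gamma\in\Gamma$ with $w(\gamma)=m_j^{-1}$ there are unique $a\le n_j$ and $(\xi_k,\varepsilon_k,\eta_k)_{k=1}^a$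 with $\xi_a=\gamma$, $\xi_1=(q_1+1,0,m_j,\varepsilon_1e^*_{\eta_1})$, $\xi_k=(q_k+1,\xi_{k-1},m_j,\varepsilon_ke^*_{\eta_k})$ for $k>1$; set $I_1=[1,q_1]$, $I_k=[q_{k-1}+2,q_k]$. Then $e^*_\gamma=\sum_k d^*_{\xi_k}+m_j^{-1}\sum_k\varepsilon_kP^*_{I_k}e^*_{\eta_k}$. For an interval $I$, $e^*_\gamma$ is $I$-decomposable if $A_I=\{k:P^*_{I_k\cap I}e^*_{\eta_k}\neq0\}\neq\emptyset$, and then its $I$-analysis is $(I_k\cap I,\varepsilon_k,\eta_k)_{k\in A_I}$. Tree analysis of $e^*_\gamma$: the family $(I_t,\varepsilon_t,\eta_t)_{t\in\mathcal T}$ over a finite tree of finite sequences with root $\emptyset$, defined by $\eta_\emptyset=\gamma$, $I_\emptyset=(0,\mathrm{rank}\,\gamma)$, $\varepsilon_\emptyset=1$, $S_\emptyset=\{(1),\dots,(a)\}$ with $(I_{(k)},\varepsilon_{(k)},\eta_{(k)})=(I_k,\varepsilon_k,\eta_k)$ from the evaluation analysis; inductively, if $e^*_{\eta_t}$ is $I_t$-decomposable with $I_t$-analysis $(I'_k,\varepsilon'_k,\eta'_k)_{k\in A}$, then $S_t=\{t^\frown k:k\in A\}$ with $(I_{t^\frown k},\varepsilon_{t^\frown k},\eta_{t^\frown k})=(I'_k,\varepsilon'_k,\eta'_k)$; otherwise $t$ is terminal. For a finitely supported $y$, the covering index for $y$ is the maximal $t\in\mathcal T$ with $\mathrm{rng}\,y\cap\mathrm{rng}\,e^*_\gamma\subseteq\mathrm{rng}(e^*_{\eta_t}P_{I_t})$.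 A branch of length $r$ from $u$ to $v$ in a tree is a sequence $(u_l)_{l=0}^r$ with $u_0=u$, $u_{l+1}$ an immediate successor of $u_l$, $u_r=v$. *)

theory Defs
  imports Complex_Main "HOL-Library.Sublist"
begin

definition seq_ok :: "(nat \<Rightarrow> nat) \<Rightarrow> (nat \<Rightarrow> nat) \<Rightarrow> bool" where
  "seq_ok m n \<longleftrightarrow> m 1 = 4 \<and> n 1 = 4 \<and>
     (\<forall>j\<ge>1. m (j+1) \<ge> (m j)^2) \<and>
     (\<forall>j\<ge>1. real (n (j+1)) \<ge> real (m (j+1))^2 * (4 * real (n j)) powr (log 2 (real (m (j+1)))))"

definition supp :: "(nat \<Rightarrow> real) \<Rightarrow> nat set" where
  "supp f = {x. f x \<noteq> 0}"

definition estar :: "nat \<Rightarrow> nat \<Rightarrow> real" where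
  "estar k = (\<lambda>x. if x = k then 1 else 0)"

definition block_less :: "(nat \<Rightarrow> real) \<Rightarrow> (nat \<Rightarrow> real) \<Rightarrow> bool" where
  "block_less f g \<longleftrightarrow> (\<forall>x\<in>supp f. \<forall>y\<in>supp g. x < y)"

inductive_set W :: "(nat \<Rightarrow> nat) \<Rightarrow> (nat \<Rightarrow> nat) \<Rightarrow> (nat \<Rightarrow> real) set"
  for m n where
  W_unit: "\<epsilon> \<in> {1, -1} \<Longrightarrow> (\<lambda>x. \<epsilon> * estar k x) \<in> W m n"
| W_comb: "\<lbrakk> j \<ge> 1; fs \<noteq> []; length fs \<le> n j; \<forall>g\<in>set fs. g \<in> W m n;
            \<forall>i. Suc i < length fs \<longrightarrow> block_less (fs ! i) (fs ! Suc i) \<rbrakk>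
           \<Longrightarrow> (\<lambda>x. (1 / real (m j)) * (\<Sum>g\<leftarrow>fs. g x)) \<in> W m n"

text \<open>Finite trees with root [] are modelled as finite prefix-closed sets of nat lists.\<close>

definition is_tree :: "nat list set \<Rightarrow> bool" where
  "is_tree T \<longleftrightarrow> finite T \<and> [] \<in> T \<and> (\<forall>t k. t @ [k] \<in> T \<longrightarrow> t \<in> T)"

definition succs :: "nat list set \<Rightarrow> nat list \<Rightarrow> nat list set" where
  "succs T t = {s \<in> T. \<exists>k. s = t @ [k]}"

definition W_tree_analysis ::
  "(nat \<Rightarrow> nat) \<Rightarrow> (nat \<Rightarrow> nat) \<Rightarrow> nat list set \<Rightarrow> (nat list \<Rightarrow> nat \<Rightarrow> real) \<Rightarrow> (nat \<Rightarrow> real) \<Rightarrow> bool"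
  where
  "W_tree_analysis m n T ft f \<longleftrightarrow> is_tree T \<and> ft [] = f \<and>
     (\<forall>t\<in>T. succs T t = {} \<longrightarrow> (\<exists>k \<epsilon>. \<epsilon> \<in> {1, -1} \<and> ft t = (\<lambda>x. \<epsilon> * estar k x))) \<and>
     (\<forall>t\<in>T. succs T t \<noteq> {} \<longrightarrow>
        (\<exists>j\<ge>1. card (succs T t) \<le> n j \<and> (\<forall>s\<in>succs T t. ft s \<in> W m n) \<and>
           (\<forall>s\<in>succs T t. \<forall>s'\<in>succs T t. s \<noteq> s' \<longrightarrow>
               block_less (ft s) (ft s') \<or> block_less (ft s') (ft s)) \<and>
           ft t = (\<lambda>x. (1 / real (m j)) * (\<Sum>s\<in>succs T t. ft s x))))"

text \<open>An element (q+1, 0, m_j, eps e*_eta) is G (q+1) None (m_j) eps eta, an element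
  (q+1, xi, m_j, eps e*_eta) is G (q+1) (Some xi) (m_j) eps eta; the unique element of
  Delta_1 is One.\<close>

datatype gam = One | G nat "gam option" nat real gam

fun rank :: "gam \<Rightarrow> nat" where
  "rank One = 1"
| "rank (G r _ _ _ _) = r"

text \<open>weight w(gamma) = 1 / wden gamma (only meaningful for gamma \<noteq> One)\<close>
fun wden :: "gam \<Rightarrow> nat" where
  "wden One = 0"
| "wden (G _ _ M _ _) = M"

fun age :: "gam \<Rightarrow> nat" where
  "age One = 0"
| "age (G _ None _ _ _) = 1"
| "age (G _ (Some \<xi>) _ _ _) = age \<xi> + 1"

inductive_set Gamma :: "(nat \<Rightarrow> nat) \<Rightarrow> (nat \<Rightarrow> nat) \<Rightarrow> gam set" for m n where
  Gamma_One: "One \<in> Gamma m n"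
| Gamma_0: "\<lbrakk> 1 \<le> j; j \<le> q + 1; \<epsilon> \<in> {1, -1}; \<eta> \<in> Gamma m n; rank \<eta> \<le> q \<rbrakk>
            \<Longrightarrow> G (q + 1) None (m j) \<epsilon> \<eta> \<in> Gamma m n"
| Gamma_xi: "\<lbrakk> 1 \<le> p; p < q; 1 \<le> j; j \<le> p; \<xi> \<in> Gamma m n; rank \<xi> = p; \<xi> \<noteq> One;
              wden \<xi> = m j; age \<xi> < n j; \<epsilon> \<in> {1, -1};
              \<eta> \<in> Gamma m n; p < rank \<eta>; rank \<eta> \<le> q \<rbrakk>
            \<Longrightarrow> G (q + 1) (Some \<xi>) (m j) \<epsilon> \<eta> \<in> Gamma m n"

text \<open>dc gamma delta = e*_gamma(d_delta) = d_delta(gamma): the coefficient of d*_delta in the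
  expansion of e*_gamma in the basis (d*_delta), obtained by unfolding
  e*_gamma = d*_gamma + c*_gamma.\<close>

fun dc :: "gam \<Rightarrow> gam \<Rightarrow> real" where
  "dc One = (\<lambda>\<delta>. if \<delta> = One then 1 else 0)"
| "dc (G r None M \<epsilon> \<eta>) = (\<lambda>\<delta>. (if \<delta> = G r None M \<epsilon> \<eta> then 1 else 0)
      + (if 0 < rank \<delta> \<and> rank \<delta> \<le> r - 1 then \<epsilon> / real M * dc \<eta> \<delta> else 0))"
| "dc (G r (Some \<xi>) M \<epsilon> \<eta>) = (\<lambda>\<delta>. (if \<delta> = G r (Some \<xi>) M \<epsilon> \<eta> then 1 else 0) + dc \<xi> \<delta>
      + (if rank \<xi> < rank \<delta> \<and> rank \<delta> \<le> r - 1 then \<epsilon> / real M * dc \<eta> \<delta> else 0))"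

text \<open>A finitely supported y in B_mT is y = sum a_delta d_delta (finite sum); a is its
  coefficient function, so d*_xi(y) = a xi, and y(eta) = e*_eta(y).\<close>

definition yvec :: "(gam \<Rightarrow> real) \<Rightarrow> gam \<Rightarrow> real" where
  "yvec a \<eta> = (\<Sum>\<delta>\<in>{\<delta>. a \<delta> \<noteq> 0}. a \<delta> * dc \<eta> \<delta>)"

definition finsupp_BmT :: "(nat \<Rightarrow> nat) \<Rightarrow> (nat \<Rightarrow> nat) \<Rightarrow> (gam \<Rightarrow> real) \<Rightarrow> bool" where
  "finsupp_BmT m n a \<longleftrightarrow> finite {\<delta>. a \<delta> \<noteq> 0} \<and> {\<delta>. a \<delta> \<noteq> 0} \<subseteq> Gamma m n"

definition normalised :: "(nat \<Rightarrow> nat) \<Rightarrow> (nat \<Rightarrow> nat) \<Rightarrow> (gam \<Rightarrow> real) \<Rightarrow> bool" where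
  "normalised m n a \<longleftrightarrow> bdd_above ((\<lambda>\<eta>. \<bar>yvec a \<eta>\<bar>) ` Gamma m n) \<and>
     (SUP \<eta>\<in>Gamma m n. \<bar>yvec a \<eta>\<bar>) = 1"

definition ivl_hull :: "nat set \<Rightarrow> nat set" where
  "ivl_hull S = (if S = {} then {} else {Min S..Max S})"

definition rng_vec :: "(gam \<Rightarrow> real) \<Rightarrow> nat set" where
  "rng_vec a = ivl_hull (rank ` {\<delta>. a \<delta> \<noteq> 0})"

text \<open>rng of e*_eta P_I = P*_I e*_eta\<close>
definition rng_fun :: "(nat \<Rightarrow> nat) \<Rightarrow> (nat \<Rightarrow> nat) \<Rightarrow> gam \<Rightarrow> nat set \<Rightarrow> nat set" where
  "rng_fun m n \<eta> I = ivl_hull (rank ` {\<delta> \<in> Gamma m n. rank \<delta> \<in> I \<and> dc \<eta> \<delta> \<noteq> 0})"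

definition rng_e :: "(nat \<Rightarrow> nat) \<Rightarrow> (nat \<Rightarrow> nat) \<Rightarrow> gam \<Rightarrow> nat set" where
  "rng_e m n \<eta> = ivl_hull (rank ` {\<delta> \<in> Gamma m n. dc \<eta> \<delta> \<noteq> 0})"

text \<open>P*_J e*_eta \<noteq> 0\<close>
definition Pnz :: "(nat \<Rightarrow> nat) \<Rightarrow> (nat \<Rightarrow> nat) \<Rightarrow> nat set \<Rightarrow> gam \<Rightarrow> bool" where
  "Pnz m n J \<eta> \<longleftrightarrow> (\<exists>\<delta>\<in>Gamma m n. rank \<delta> \<in> J \<and> dc \<eta> \<delta> \<noteq> 0)"

text \<open>Evaluation analysis: the list (I_k, eps_k, eta_k), k = 1..a (list position k-1).\<close>
fun eva :: "gam \<Rightarrow> (nat set \<times> real \<times> gam) list" where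
  "eva One = []"
| "eva (G r None M \<epsilon> \<eta>) = [({1..r - 1}, \<epsilon>, \<eta>)]"
| "eva (G r (Some \<xi>) M \<epsilon> \<eta>) = eva \<xi> @ [({rank \<xi> + 1..r - 1}, \<epsilon>, \<eta>)]"

text \<open>Tree analysis of e*_gamma: the set of (t, I_t, eps_t, eta_t).\<close>
inductive_set TA :: "(nat \<Rightarrow> nat) \<Rightarrow> (nat \<Rightarrow> nat) \<Rightarrow> gam \<Rightarrow> (nat list \<times> nat set \<times> real \<times> gam) set"
  for m n \<gamma> where
  TA_root: "([], {0<..<rank \<gamma>}, 1, \<gamma>) \<in> TA m n \<gamma>"
| TA_rootchild: "\<lbrakk> 1 \<le> k; k \<le> length (eva \<gamma>); eva \<gamma> ! (k - 1) = (I, \<epsilon>, \<eta>) \<rbrakk>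
                 \<Longrightarrow> ([k], I, \<epsilon>, \<eta>) \<in> TA m n \<gamma>"
| TA_child: "\<lbrakk> (t, I, \<epsilon>, \<eta>) \<in> TA m n \<gamma>; t \<noteq> []; 1 \<le> k; k \<le> length (eva \<eta>);
              eva \<eta> ! (k - 1) = (I', \<epsilon>', \<eta>'); Pnz m n (I' \<inter> I) \<eta>' \<rbrakk>
             \<Longrightarrow> (t @ [k], I' \<inter> I, \<epsilon>', \<eta>') \<in> TA m n \<gamma>"

definition covers :: "(nat \<Rightarrow> nat) \<Rightarrow> (nat \<Rightarrow> nat) \<Rightarrow> gam \<Rightarrow> (gam \<Rightarrow> real) \<Rightarrow> nat list \<Rightarrow> bool" where
  "covers m n \<gamma> a t \<longleftrightarrow> (\<exists>I \<epsilon> \<eta>. (t, I, \<epsilon>, \<eta>) \<in> TA m n \<gamma> \<and>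
      rng_vec a \<inter> rng_e m n \<gamma> \<subseteq> rng_fun m n \<eta> I)"

definition covering_index :: "(nat \<Rightarrow> nat) \<Rightarrow> (nat \<Rightarrow> nat) \<Rightarrow> gam \<Rightarrow> (gam \<Rightarrow> real) \<Rightarrow> nat list \<Rightarrow> bool" where
  "covering_index m n \<gamma> a v \<longleftrightarrow> covers m n \<gamma> a v \<and> (\<forall>t. covers m n \<gamma> a t \<longrightarrow> \<not> strict_prefix v t)"

end

theory Submission
  imports Defs
begin

text \<open>Every step down a tree analysis passes through a weight \<open>1/m_j \<le> 1/4\<close>, so on the interval
  \<open>I_t\<close> of a node \<open>t\<close> at depth \<open>r\<close> the functional \<open>e*_\<gamma>\<close> agrees with \<open>c \<cdot> e*_\<eta>\<^sub>t\<close>, where \<open>|c| \<le> 4^-r\<close>.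
  If \<open>v\<close> covers \<open>y\<close>, the support of \<open>y\<close> meets the range of \<open>e*_\<gamma>\<close> only in ranks from \<open>I_v\<close>, hence
  \<open>e*_\<gamma>(y) = c \<cdot> e*_\<eta>\<^sub>v(P_I\<^sub>v y)\<close>. The bound \<open>|e*_\<eta>(P_[1,q] y)| \<le> 2\<close>, proved by induction along the
  construction of \<open>\<Gamma>\<close>, then gives \<open>|e*_\<gamma>(y)| \<le> 4^(1-r)\<close>. In \<open>W\<close>, the
  value \<open>f_t(l)\<close> at each node \<open>t\<close> of the branch to \<open>e*_l\<close> comes from a single successor, as successors
  have disjoint supports, so \<open>f(l) \<le> 4^-r\<close>.\<close>

lemma seq_ok_m_ge_4:
  assumes "seq_ok m n" and "j \<ge> 1"
  shows "m j \<ge> 4"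
  using assms(2)
proof (induction j rule: dec_induct)
  case base
  then show ?case using assms(1) by (simp add: seq_ok_def)
next
  case (step j)
  have "m j \<le> (m j)^2" by (simp add: power2_eq_square)
  also have "\<dots> \<le> m (j + 1)" using assms(1) step.hyps(1) by (simp add: seq_ok_def)
  finally show ?case using step.IH by simp
qed

lemma Gamma_rank_pos: "\<eta> \<in> Gamma m n \<Longrightarrow> 0 < rank \<eta>"
  by (induction rule: Gamma.induct) auto

lemma Gamma_wden_ge_4: "seq_ok m n \<Longrightarrow> \<eta> \<in> Gamma m n \<Longrightarrow> \<eta> \<noteq> One \<Longrightarrow> wden \<eta> \<ge> 4"
  by (erule Gamma.cases) (auto intro: seq_ok_m_ge_4)

lemma dc_nonzero_rank_le: "\<eta> \<in> Gamma m n \<Longrightarrow> dc \<eta> \<delta> \<noteq> 0 \<Longrightarrow> rank \<delta> \<le> rank \<eta>"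
  by (induction \<eta> arbitrary: \<delta> rule: Gamma.induct) (auto split: if_splits, (fastforce)+)

lemma dc_G_None_below:
  "0 < rank \<delta> \<Longrightarrow> rank \<delta> < r \<Longrightarrow> dc (G r None M \<epsilon> \<eta>) \<delta> = \<epsilon> / real M * dc \<eta> \<delta>"
  by auto

lemma dc_G_Some_below:
  "rank \<delta> < r \<Longrightarrow>
   dc (G r (Some \<xi>) M \<epsilon> \<eta>) \<delta> = dc \<xi> \<delta> + (if rank \<xi> < rank \<delta> then \<epsilon> / real M * dc \<eta> \<delta> else 0)"
  by auto

lemma eva_entry_interval: "(I, \<epsilon>, \<eta>) \<in> set (eva \<gamma>) \<Longrightarrow> \<exists>lo hi. 0 < lo \<and> I = {lo..hi}"
  by (induction \<gamma> rule: eva.induct) auto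

lemma eva_entryD:
  assumes "\<gamma> \<in> Gamma m n" and "(I, \<epsilon>, \<eta>) \<in> set (eva \<gamma>)"
  shows "\<eta> \<in> Gamma m n \<and> \<epsilon> \<in> {1, -1} \<and> I \<subseteq> {0<..<rank \<gamma>}"
  using assms by (induction \<gamma> rule: Gamma.induct) fastforce+

lemma eva_dc:
  assumes "\<gamma> \<in> Gamma m n" and "(I, \<epsilon>, \<eta>) \<in> set (eva \<gamma>)" and "rank \<delta> \<in> I"
  shows "dc \<gamma> \<delta> = \<epsilon> / real (wden \<gamma>) * dc \<eta> \<delta>"
  using assms
proof (induction \<gamma> rule: Gamma.induct)
  case (Gamma_xi p q j \<xi> \<epsilon>' \<eta>')
  show ?case
  proof (cases "(I, \<epsilon>, \<eta>) \<in> set (eva \<xi>)")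
    case True
    then have "rank \<delta> < p" using eva_entryD[OF Gamma_xi.hyps(5) True] Gamma_xi.hyps(6) Gamma_xi.prems(2) by auto
    then show ?thesis using Gamma_xi True by auto
  next
    case False
    then have "I = {p + 1..q}" "\<epsilon> = \<epsilon>'" "\<eta> = \<eta>'" using Gamma_xi.prems Gamma_xi.hyps(6) by auto
    moreover have "dc \<xi> \<delta> = 0" using dc_nonzero_rank_le[OF Gamma_xi.hyps(5)] Gamma_xi.hyps(6) calculation(1) Gamma_xi.prems(2)
      by fastforce
    ultimately show ?thesis using Gamma_xi.prems Gamma_xi.hyps by auto
  qed
qed auto

lemma eva_coeff_abs_le:
  assumes "seq_ok m n" and "\<gamma> \<in> Gamma m n" and "(I, \<epsilon>, \<eta>) \<in> set (eva \<gamma>)"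
  shows "\<bar>\<epsilon> / real (wden \<gamma>)\<bar> \<le> 1/4"
proof -
  have "\<gamma> \<noteq> One" using assms(3) by auto
  then have "wden \<gamma> \<ge> 4" using Gamma_wden_ge_4 assms(1,2) by blast
  then show ?thesis using eva_entryD[OF assms(2,3)] by (auto simp: divide_simps)
qed

lemma TA_dc_factor:
  assumes seq: "seq_ok m n" and \<gamma>: "\<gamma> \<in> Gamma m n" and "(t, I, \<epsilon>, \<eta>) \<in> TA m n \<gamma>"
  shows "\<eta> \<in> Gamma m n \<and> (\<exists>lo hi. 0 < lo \<and> I = {lo..hi}) \<and>
    (\<exists>c. \<bar>c\<bar> \<le> (1/4) ^ length t \<and> (\<forall>\<delta>. rank \<delta> \<in> I \<longrightarrow> dc \<gamma> \<delta> = c * dc \<eta> \<delta>))"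
  using assms(3)
proof (induction rule: TA.induct)
  case TA_root
  have "{0<..<rank \<gamma>} = {1..rank \<gamma> - 1}" by auto
  then show ?case using \<gamma> by (intro conjI exI[of _ "1::real"]) (auto intro: zero_less_one)
next
  case (TA_rootchild k I \<epsilon> \<eta>)
  then have mem: "(I, \<epsilon>, \<eta>) \<in> set (eva \<gamma>)" by (metis One_nat_def Suc_le_eq Suc_pred nth_mem)
  show ?case
    using eva_entryD[OF \<gamma> mem] eva_entry_interval[OF mem] eva_dc[OF \<gamma> mem] eva_coeff_abs_le[OF seq \<gamma> mem]
    by (intro conjI exI[of _ "\<epsilon> / real (wden \<gamma>)"]) auto
next
  case (TA_child t I \<epsilon> \<eta> k I' \<epsilon>' \<eta>')
  then obtain c where \<eta>: "\<eta> \<in> Gamma m n" and I: "\<exists>lo hi. 0 < lo \<and> I = {lo..hi}"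
    and c: "\<bar>c\<bar> \<le> (1/4) ^ length t" and dc_c: "\<forall>\<delta>. rank \<delta> \<in> I \<longrightarrow> dc \<gamma> \<delta> = c * dc \<eta> \<delta>"
    by blast
  from TA_child have mem: "(I', \<epsilon>', \<eta>') \<in> set (eva \<eta>)" by (metis One_nat_def Suc_le_eq Suc_pred nth_mem)
  define c' where "c' = c * (\<epsilon>' / real (wden \<eta>))"
  have "\<bar>c'\<bar> \<le> (1/4) ^ length t * (1/4)"
    unfolding c'_def abs_mult using c eva_coeff_abs_le[OF seq \<eta> mem] by (intro mult_mono) auto
  moreover have "\<forall>\<delta>. rank \<delta> \<in> I' \<inter> I \<longrightarrow> dc \<gamma> \<delta> = c' * dc \<eta>' \<delta>"
    using dc_c eva_dc[OF \<eta> mem] by (simp add: c'_def)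
  moreover have "\<exists>lo hi. 0 < lo \<and> I' \<inter> I = {lo..hi}"
    using I eva_entry_interval[OF mem] by (metis Int_atLeastAtMost less_max_iff_disj)
  ultimately show ?case using eva_entryD[OF \<eta> mem] by auto
qed

lemma normalised_abs_yvec_le_1:
  assumes "normalised m n a" and "\<eta> \<in> Gamma m n"
  shows "\<bar>yvec a \<eta>\<bar> \<le> 1"
proof -
  have "\<bar>yvec a \<eta>\<bar> \<le> (SUP \<eta>\<in>Gamma m n. \<bar>yvec a \<eta>\<bar>)"
    using assms by (intro cSUP_upper) (auto simp: normalised_def)
  then show ?thesis using assms(1) by (simp add: normalised_def)
qed

text \<open>\<open>eval_on a \<eta> J\<close> is \<open>e*_\<eta>(P_J y)\<close> for \<open>y = \<Sum> a_\<delta> d_\<delta>\<close>.\<close>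

definition eval_on :: "(gam \<Rightarrow> real) \<Rightarrow> gam \<Rightarrow> nat set \<Rightarrow> real" where
  "eval_on a \<eta> J = (\<Sum>\<delta>\<in>{\<delta>. a \<delta> \<noteq> 0 \<and> rank \<delta> \<in> J}. a \<delta> * dc \<eta> \<delta>)"

lemma eval_on_empty [simp]: "eval_on a \<eta> {} = 0"
  by (simp add: eval_on_def)

lemma yvec_eq_eval_on:
  assumes "finite {\<delta>. a \<delta> \<noteq> 0}" and "\<And>\<delta>. a \<delta> \<noteq> 0 \<Longrightarrow> dc \<eta> \<delta> \<noteq> 0 \<Longrightarrow> rank \<delta> \<in> J"
  shows "yvec a \<eta> = eval_on a \<eta> J"
  unfolding yvec_def eval_on_def
  by (rule sum.mono_neutral_right[OF assms(1)]) (use assms(2) in auto)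

lemma eval_on_diff:
  assumes "finite {\<delta>. a \<delta> \<noteq> 0}" and "A \<subseteq> B"
  shows "eval_on a \<eta> (B - A) = eval_on a \<eta> B - eval_on a \<eta> A"
proof -
  let ?S = "\<lambda>J. {\<delta>. a \<delta> \<noteq> 0 \<and> rank \<delta> \<in> J}"
  have "?S (B - A) = ?S B - ?S A" by auto
  moreover have "finite (?S B)" by (rule finite_subset[OF _ assms(1)]) auto
  ultimately show ?thesis
    unfolding eval_on_def using assms(2) by (simp add: sum_diff subset_eq)
qed

lemma eval_on_scale:
  assumes "\<And>\<delta>. rank \<delta> \<in> J \<Longrightarrow> dc \<gamma> \<delta> = c * dc \<eta> \<delta>"
  shows "eval_on a \<gamma> J = c * eval_on a \<eta> J"
  unfolding eval_on_def sum_distrib_left using assms by (intro sum.cong) auto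

lemma eval_on_G_None:
  assumes "J \<subseteq> {0<..<r}"
  shows "eval_on a (G r None M \<epsilon> \<eta>) J = \<epsilon> / real M * eval_on a \<eta> J"
  using assms by (intro eval_on_scale dc_G_None_below) auto

lemma eval_on_G_Some:
  assumes "finite {\<delta>. a \<delta> \<noteq> 0}" and "J \<subseteq> {..<r}"
  shows "eval_on a (G r (Some \<xi>) M \<epsilon> \<eta>) J
    = eval_on a \<xi> J + \<epsilon> / real M * eval_on a \<eta> (J \<inter> {rank \<xi><..})"
proof -
  have fin: "finite {\<delta>. a \<delta> \<noteq> 0 \<and> rank \<delta> \<in> J}" by (rule finite_subset[OF _ assms(1)]) auto
  have "eval_on a (G r (Some \<xi>) M \<epsilon> \<eta>) J = eval_on a \<xi> J +
      (\<Sum>\<delta>\<in>{\<delta>. a \<delta> \<noteq> 0 \<and> rank \<delta> \<in> J}. if rank \<xi> < rank \<delta> then \<epsilon> / real M * (a \<delta> * dc \<eta> \<delta>) else 0)"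
    unfolding eval_on_def sum.distrib[symmetric] using assms
    by (intro sum.cong) (auto simp: dc_G_Some_below algebra_simps)
  also have "(\<Sum>\<delta>\<in>{\<delta>. a \<delta> \<noteq> 0 \<and> rank \<delta> \<in> J}. if rank \<xi> < rank \<delta> then \<epsilon> / real M * (a \<delta> * dc \<eta> \<delta>) else 0)
      = \<epsilon> / real M * eval_on a \<eta> (J \<inter> {rank \<xi><..})"
    unfolding eval_on_def sum_distrib_left sum.If_cases[OF fin]
    by (simp add: Int_def conj_ac)
  finally show ?thesis .
qed

lemma eval_on_initial_eq_yvec:
  assumes "finsupp_BmT m n a" and "\<eta> \<in> Gamma m n" and "rank \<eta> \<le> q"
  shows "eval_on a \<eta> {1..q} = yvec a \<eta>"
  using assms dc_nonzero_rank_le[OF assms(2)] Gamma_rank_pos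
  by (intro yvec_eq_eval_on[symmetric]) (fastforce simp: finsupp_BmT_def)+

lemma abs_eval_on_initial_le_1:
  assumes "finsupp_BmT m n a" "normalised m n a" "\<eta> \<in> Gamma m n" and "rank \<eta> \<le> q"
  shows "\<bar>eval_on a \<eta> {1..q}\<bar> \<le> 1"
  using eval_on_initial_eq_yvec[OF assms(1,3,4)] normalised_abs_yvec_le_1[OF assms(2,3)] by simp

lemma abs_eval_on_initial_le_2:
  assumes seq: "seq_ok m n" and a: "finsupp_BmT m n a" "normalised m n a"
  shows "\<eta> \<in> Gamma m n \<Longrightarrow> \<bar>eval_on a \<eta> {1..q}\<bar> \<le> 2"
proof (induction \<eta> arbitrary: q rule: Gamma.induct)
  case Gamma_One
  show ?case using abs_eval_on_initial_le_1[OF a Gamma.Gamma_One, of q] by (cases "q = 0") auto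
next
  case (Gamma_0 j r \<epsilon> \<eta>)
  let ?g = "G (r + 1) None (m j) \<epsilon> \<eta>"
  have g: "?g \<in> Gamma m n" using Gamma_0.hyps by (intro Gamma.Gamma_0)
  have m: "real (m j) \<ge> 4" using seq_ok_m_ge_4[OF seq Gamma_0.hyps(1)] by simp
  show ?case
  proof (cases "r + 1 \<le> q")
    case False
    then have "\<bar>eval_on a ?g {1..q}\<bar> = \<bar>eval_on a \<eta> {1..q}\<bar> / real (m j)"
      using Gamma_0.hyps(3) m by (subst eval_on_G_None) (auto simp: abs_mult)
    also have "\<dots> \<le> 2 / 4" using Gamma_0.IH m by (intro frac_le) auto
    finally show ?thesis by simp
  qed (use abs_eval_on_initial_le_1[OF a g, of q] in auto)
next
  case (Gamma_xi p r j \<xi> \<epsilon> \<eta>)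
  let ?g = "G (r + 1) (Some \<xi>) (m j) \<epsilon> \<eta>"
  have g: "?g \<in> Gamma m n" using Gamma_xi.hyps by (intro Gamma.Gamma_xi)
  have fin: "finite {\<delta>. a \<delta> \<noteq> 0}" using a(1) by (simp add: finsupp_BmT_def)
  have m: "real (m j) \<ge> 4" using seq_ok_m_ge_4[OF seq Gamma_xi.hyps(3)] by simp
  consider "r + 1 \<le> q" | "q \<le> p" | "p < q" "q \<le> r" by linarith
  then show ?case
  proof cases
    case 1
    then show ?thesis using abs_eval_on_initial_le_1[OF a g, of q] by auto
  next
    case 2
    then have "{1..q} \<inter> {p<..} = {}" by auto
    then show ?thesis using Gamma_xi.IH(1) 2 Gamma_xi.hyps(2,6) by (subst eval_on_G_Some[OF fin]) auto
  next
    case 3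
    then have "{1..q} \<inter> {p<..} = {1..q} - {1..p}" by auto
    then have "\<bar>eval_on a \<eta> ({1..q} \<inter> {p<..})\<bar> \<le> 4"
      using eval_on_diff[OF fin, of "{1..p}" "{1..q}" \<eta>] 3 Gamma_xi.IH(2)[of q] Gamma_xi.IH(2)[of p] by simp
    then have "\<bar>\<epsilon> / real (m j) * eval_on a \<eta> ({1..q} \<inter> {p<..})\<bar> \<le> 1"
      using Gamma_xi.hyps(10) m by (auto simp: abs_mult field_simps)
    moreover have "\<bar>eval_on a \<xi> {1..q}\<bar> \<le> 1"
      using abs_eval_on_initial_le_1[OF a Gamma_xi.hyps(5)] 3 Gamma_xi.hyps(6) by simp
    moreover have "eval_on a ?g {1..q} = eval_on a \<xi> {1..q} + \<epsilon> / real (m j) * eval_on a \<eta> ({1..q} \<inter> {p<..})"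
      using 3 Gamma_xi.hyps(6) by (subst eval_on_G_Some[OF fin]) auto
    ultimately show ?thesis by linarith
  qed
qed

lemma abs_eval_on_interval_le_4:
  assumes "seq_ok m n" "finsupp_BmT m n a" "normalised m n a" "\<eta> \<in> Gamma m n" and "0 < lo"
  shows "\<bar>eval_on a \<eta> {lo..hi}\<bar> \<le> 4"
proof (cases "lo \<le> hi")
  case True
  have "{lo..hi} = {1..hi} - {1..lo - 1}" using \<open>0 < lo\<close> by auto
  moreover have "finite {\<delta>. a \<delta> \<noteq> 0}" using assms(2) by (simp add: finsupp_BmT_def)
  ultimately have "eval_on a \<eta> {lo..hi} = eval_on a \<eta> {1..hi} - eval_on a \<eta> {1..lo - 1}"
    using True by (simp only:) (rule eval_on_diff; auto)
  then show ?thesis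
    using abs_eval_on_initial_le_2[OF assms(1-4), of hi] abs_eval_on_initial_le_2[OF assms(1-4), of "lo - 1"] by linarith
qed simp

lemma ivl_hull_mem: "finite S \<Longrightarrow> x \<in> S \<Longrightarrow> x \<in> ivl_hull S"
  by (auto simp: ivl_hull_def)

lemma ivl_hull_subset_atLeastAtMost: "S \<subseteq> {lo..hi} \<Longrightarrow> ivl_hull S \<subseteq> {lo..hi}"
  using finite_subset[of S "{lo..hi}"] Min_in[of S] Max_in[of S]
  by (auto simp: ivl_hull_def)

lemma covered_support_rank_mem:
  assumes "\<gamma> \<in> Gamma m n" and "finsupp_BmT m n a"
    and "rng_vec a \<inter> rng_e m n \<gamma> \<subseteq> rng_fun m n \<eta> {lo..hi}"
    and "a \<delta> \<noteq> 0" and "dc \<gamma> \<delta> \<noteq> 0"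
  shows "rank \<delta> \<in> {lo..hi}"
proof -
  have "rank \<delta> \<in> rng_vec a"
    unfolding rng_vec_def using assms(2,4) by (intro ivl_hull_mem) (auto simp: finsupp_BmT_def)
  moreover have "finite (rank ` {\<delta> \<in> Gamma m n. dc \<gamma> \<delta> \<noteq> 0})"
    by (rule finite_subset[of _ "{..rank \<gamma>}"]) (use dc_nonzero_rank_le[OF assms(1)] in auto)
  then have "rank \<delta> \<in> rng_e m n \<gamma>"
    unfolding rng_e_def using assms(2,4,5) by (intro ivl_hull_mem) (auto simp: finsupp_BmT_def)
  moreover have "rng_fun m n \<eta> {lo..hi} \<subseteq> {lo..hi}"
    unfolding rng_fun_def by (intro ivl_hull_subset_atLeastAtMost) auto
  ultimately show ?thesis using assms(3) by blast
qed

lemma abs_yvec_le_covering_index: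
  assumes seq: "seq_ok m n" and \<gamma>: "\<gamma> \<in> Gamma m n" and a: "finsupp_BmT m n a" "normalised m n a"
    and "covering_index m n \<gamma> a v"
  shows "\<bar>yvec a \<gamma>\<bar> \<le> 4 * (1/4) ^ length v"
proof -
  obtain I \<epsilon> \<eta> where ta: "(v, I, \<epsilon>, \<eta>) \<in> TA m n \<gamma>"
    and cov: "rng_vec a \<inter> rng_e m n \<gamma> \<subseteq> rng_fun m n \<eta> I"
    using assms(5) by (auto simp: covering_index_def covers_def)
  from TA_dc_factor[OF seq \<gamma> ta] obtain lo hi c where \<eta>: "\<eta> \<in> Gamma m n" and I: "0 < lo" "I = {lo..hi}"
    and c: "\<bar>c\<bar> \<le> (1/4) ^ length v" and dc_c: "\<forall>\<delta>. rank \<delta> \<in> I \<longrightarrow> dc \<gamma> \<delta> = c * dc \<eta> \<delta>"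
    by blast
  have "yvec a \<gamma> = eval_on a \<gamma> {lo..hi}"
    using a(1) covered_support_rank_mem[OF \<gamma> a(1) cov[unfolded I(2)]]
    by (intro yvec_eq_eval_on) (auto simp: finsupp_BmT_def)
  also have "\<dots> = c * eval_on a \<eta> {lo..hi}"
    using dc_c I(2) by (intro eval_on_scale) auto
  finally have "\<bar>yvec a \<gamma>\<bar> = \<bar>c\<bar> * \<bar>eval_on a \<eta> {lo..hi}\<bar>" by (simp add: abs_mult)
  also have "\<dots> \<le> (1/4) ^ length v * 4"
    using c abs_eval_on_interval_le_4[OF seq a \<eta> I(1)] by (intro mult_mono) auto
  finally show ?thesis by simp
qed

lemma is_tree_prefix_closed: "is_tree T \<Longrightarrow> u @ w \<in> T \<Longrightarrow> u \<in> T"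
proof (induction w rule: rev_induct)
  case (snoc k w)
  then show ?case unfolding is_tree_def by (metis append_assoc)
qed simp

lemma W_tree_analysis_child_value:
  assumes seq: "seq_ok m n" and W: "W_tree_analysis m n T ft f"
    and tk: "t @ [k] \<in> T" and pos: "0 < ft (t @ [k]) l"
  shows "\<exists>j\<ge>1. ft t l = ft (t @ [k]) l / real (m j)"
proof -
  have tree: "is_tree T" using W by (simp add: W_tree_analysis_def)
  have child: "t @ [k] \<in> succs T t" using tk by (simp add: succs_def)
  then obtain j where "j \<ge> 1"
    and blocks: "\<forall>s\<in>succs T t. \<forall>s'\<in>succs T t. s \<noteq> s' \<longrightarrow> block_less (ft s) (ft s') \<or> block_less (ft s') (ft s)"
    and ft_t: "ft t = (\<lambda>x. (1 / real (m j)) * (\<Sum>s\<in>succs T t. ft s x))"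
    using W is_tree_prefix_closed[OF tree tk] unfolding W_tree_analysis_def by blast
  have "finite (succs T t)"
    using tree by (auto simp: is_tree_def succs_def)
  moreover have "ft s l = 0" if s: "s \<in> succs T t - {t @ [k]}" for s
  proof (rule ccontr)
    assume "ft s l \<noteq> 0"
    then have "l \<in> supp (ft s)" "l \<in> supp (ft (t @ [k]))" using pos by (auto simp: supp_def)
    moreover have "block_less (ft s) (ft (t @ [k])) \<or> block_less (ft (t @ [k])) (ft s)"
      using blocks child s by blast
    ultimately show False by (auto simp: block_less_def)
  qed
  ultimately have "(\<Sum>s\<in>succs T t. ft s l) = ft (t @ [k]) l"
    using child by (simp add: sum.remove)
  then show ?thesis using \<open>j \<ge> 1\<close> ft_t by auto
qed

lemma W_tree_analysis_unit_leaf_value_le: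
  assumes seq: "seq_ok m n" and W: "W_tree_analysis m n T ft f"
    and "v \<in> T" and "ft v = estar l"
  shows "f l \<le> (1/4) ^ length v"
proof -
  have tree: "is_tree T" using W by (simp add: W_tree_analysis_def)
  have "0 < ft t l \<and> ft t l \<le> (1/4) ^ length s" if "t @ s = v" for s t
    using that
  proof (induction s arbitrary: t)
    case Nil
    then show ?case using assms(4) by (simp add: estar_def)
  next
    case (Cons k s)
    then have IH: "0 < ft (t @ [k]) l" "ft (t @ [k]) l \<le> (1/4) ^ length s" by auto
    have "t @ [k] \<in> T" using Cons.prems assms(3) is_tree_prefix_closed[OF tree, of "t @ [k]" s] by simp
    then obtain j where "j \<ge> 1" and ft_t: "ft t l = ft (t @ [k]) l / real (m j)"
      using W_tree_analysis_child_value[OF seq W _ IH(1)] by blast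
    have m: "real (m j) \<ge> 4" using seq_ok_m_ge_4[OF seq \<open>j \<ge> 1\<close>] by simp
    have "ft t l \<le> ft (t @ [k]) l / 4" unfolding ft_t using IH m by (intro divide_left_mono) auto
    then show ?case using IH m ft_t by simp
  qed
  from this[of "[]" v] show ?thesis using W by (simp add: W_tree_analysis_def)
qed

theorem lemma3p2:
  fixes m n :: "nat \<Rightarrow> nat"
  assumes "seq_ok m n"
  shows "(\<forall>(i::nat) \<gamma> a v.
            i \<ge> 1 \<and> \<gamma> \<in> Gamma m n \<and> finsupp_BmT m n a \<and> normalised m n a \<and>
            v \<noteq> [] \<and> covering_index m n \<gamma> a v \<and>
            (\<forall>\<xi>\<in>Gamma m n. \<bar>a \<xi>\<bar> < (1/4) ^ (i + 3)) \<and>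
            \<bar>yvec a \<gamma>\<bar> > (1/4) ^ (i + 1)
            \<longrightarrow> length v \<le> i + 1)
       \<and> (\<forall>(i::nat) f T ft v l.
            i \<ge> 1 \<and> f \<in> W m n \<and> W_tree_analysis m n T ft f \<and> v \<in> T \<and> v \<noteq> [] \<and>
            ft v = estar l \<and> f l > (1/4) ^ (i + 1)
            \<longrightarrow> length v \<le> i)"
proof (intro conjI allI impI)
  fix i :: nat and \<gamma> a v
  assume h: "i \<ge> 1 \<and> \<gamma> \<in> Gamma m n \<and> finsupp_BmT m n a \<and> normalised m n a \<and>
            v \<noteq> [] \<and> covering_index m n \<gamma> a v \<and>
            (\<forall>\<xi>\<in>Gamma m n. \<bar>a \<xi>\<bar> < (1/4) ^ (i + 3)) \<and>
            \<bar>yvec a \<gamma>\<bar> > (1/4) ^ (i + 1)"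
  then have "(1/4::real) ^ (i + 1) < 4 * (1/4) ^ length v"
    using abs_yvec_le_covering_index[OF assms] by (meson less_le_trans)
  also have "4 * (1/4) ^ length v = (1/4::real) ^ (length v - 1)"
    using h by (cases v) auto
  finally have "(1/4::real) ^ (i + 1) < (1/4) ^ (length v - 1)" .
  then show "length v \<le> i + 1" by (subst (asm) power_strict_decreasing_iff) auto
next
  fix i :: nat and f T ft v l
  assume "i \<ge> 1 \<and> f \<in> W m n \<and> W_tree_analysis m n T ft f \<and> v \<in> T \<and> v \<noteq> [] \<and>
            ft v = estar l \<and> f l > (1/4) ^ (i + 1)"
  then have "(1/4::real) ^ (i + 1) < (1/4) ^ length v"
    using W_tree_analysis_unit_leaf_value_le[OF assms] by (meson less_le_trans)
  then show "length v \<le> i" by (subst (asm) power_strict_decreasing_iff) auto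
qed

end
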